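(* Let $Q$ be an infinite $\mathbb{N}^*\setminus Q$--free set. Then for every real $\nu>0$: $$\sum_{q\in Q}q^{-\nu}<\infty \iff \sum_{\pi\in\mathrm{Supp}(Q)}\pi^{-\nu}<\infty.$$ In particular, $\nu(Q)$ depends only on $\mathrm{Supp}(Q)$.
   Context: $\mathbb{N}^*$ denotes the set of positive integers. A set $Q\subseteq\mathbb{N}^*$ is called $\mathbb{N}^*\setminus Q$--free if for every $q\in\mathbb{N}^*$: $q\in Q$ if and only if no $v\in\mathbb{N}^*\setminus Q$ divides $q$. $\mathrm{Supp}(Q)$ denotes the set of all primes dividing at least one element of $Q$. For an infinite set $Q\subseteq\mathbb{N}^*$, its exponent of convergence is $\nu(Q)=\inf\{\nu>0:\sum_{q\in Q}q^{-\nu}<\infty\}$. *)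

theory Defs
  imports "HOL-Analysis.Analysis" "HOL-Computational_Algebra.Primes"
begin

definition compl_free :: "nat set \<Rightarrow> bool" where
  "compl_free Q \<longleftrightarrow> 0 \<notin> Q \<and>
     (\<forall>q>0. q \<in> Q \<longleftrightarrow> \<not> (\<exists>v. v > 0 \<and> v \<notin> Q \<and> v dvd q))"

definition Supp :: "nat set \<Rightarrow> nat set" where
  "Supp Q = {p. prime p \<and> (\<exists>q\<in>Q. p dvd q)}"

definition conv_exp :: "nat set \<Rightarrow> real" where
  "conv_exp Q = Inf {\<nu>. \<nu> > 0 \<and> (\<lambda>q. real q powr (-\<nu>)) summable_on Q}"

end

theory Submission
  imports Defs
begin

(* A set Q that is (N* \ Q)-free is closed under positive divisors, so its
   support Supp Q (the primes dividing some element) is a subset of Q; hence summability of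
   q^(-nu) over Q implies summability of p^(-nu) over Supp Q.
   Conversely, for ANY set Q of positive integers, every finite F within Q consists of
   P-smooth numbers for a finite set P of primes within Supp Q.  Comparing with the Euler
   product, sum over F of n^(-nu) <= prod over P of 1/(1 - p^(-nu)), and since
   1/(1 - x) <= exp (x/(1 - 2^(-nu))) for 0 <= x <= 2^(-nu), this is at most
   exp (T/(1 - 2^(-nu))) with T the sum of p^(-nu) over Supp Q.  The finite partial sums
   are thus bounded, so the nonnegative series over Q converges. *)

lemma compl_free_divisor_closed:
  assumes "compl_free Q" "q \<in> Q" "d dvd q" "d > 0"
  shows "d \<in> Q"
  using assms unfolding compl_free_def by (metis neq0_conv)

lemma Supp_subset_if_compl_free:
  assumes "compl_free Q"
  shows "Supp Q \<subseteq> Q"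
proof
  fix p assume "p \<in> Supp Q"
  then obtain q where "prime p" "q \<in> Q" "p dvd q" unfolding Supp_def by auto
  then show "p \<in> Q" using compl_free_divisor_closed[OF assms] prime_gt_0_nat by blast
qed

lemma powr_prime_power_mult:
  fixes p k m :: nat and s :: real
  assumes "p > 0"
  shows "real (p ^ k * m) powr s = (real p powr s) ^ k * real m powr s"
proof -
  have "real (p ^ k * m) powr s = (real p ^ k) powr s * real m powr s"
    by (simp add: powr_mult)
  also have "(real p ^ k) powr s = (real p powr s) ^ k"
    using assms by (simp add: powr_realpow[symmetric] powr_powr powr_power mult.commute)
  finally show ?thesis .
qed

lemma split_off_prime_power:
  fixes n p :: nat
  assumes p: "prime p" and n: "n > 0" and factors: "prime_factors n \<subseteq> insert p P"
  defines "m \<equiv> n div p ^ multiplicity p n"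
  shows "n = p ^ multiplicity p n * m" and "m > 0" and "prime_factors m \<subseteq> P"
proof -
  show decomp: "n = p ^ multiplicity p n * m"
    unfolding m_def using multiplicity_dvd[of p n] by simp
  have not_dvd: "\<not> p dvd m"
    unfolding m_def by (rule multiplicity_decompose) (use n p in auto)
  show "m > 0" using decomp n by (auto intro: Nat.gr0I)
  have "m dvd n" using decomp by (metis dvd_triv_right)
  then have "prime_factors m \<subseteq> prime_factors n"
    using n \<open>m > 0\<close> by (auto simp: in_prime_factors_iff intro: dvd_trans)
  moreover have "p \<notin> prime_factors m" using not_dvd by auto
  ultimately show "prime_factors m \<subseteq> P" using factors by blast
qed

lemma geometric_partial_sum_le:
  fixes x :: real
  assumes "0 \<le> x" "x < 1"
  shows "(\<Sum>k\<le>K. x ^ k) \<le> 1 / (1 - x)"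
proof -
  have "(\<Sum>k\<le>K. x ^ k) = (\<Sum>k<Suc K. x ^ k)" by (simp add: lessThan_Suc_atMost)
  also have "\<dots> = (1 - x ^ Suc K) / (1 - x)" using assms by (subst sum_gp_strict) auto
  also have "\<dots> \<le> 1 / (1 - x)" using assms by (intro divide_right_mono) auto
  finally show ?thesis .
qed

lemma smooth_sum_le_euler_product:
  fixes \<nu> :: real
  assumes "finite P" "\<forall>p\<in>P. prime p" "\<nu> > 0"
    and "finite F" "\<forall>n\<in>F. n > 0 \<and> prime_factors n \<subseteq> P"
  shows "(\<Sum>n\<in>F. real n powr (-\<nu>)) \<le> (\<Prod>p\<in>P. 1 / (1 - real p powr (-\<nu>)))"
  using assms(1,2,4,5)
proof (induction P arbitrary: F rule: finite_induct)
  case empty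
  then have "F \<subseteq> {1}" by (auto simp: prime_factorization_empty_iff)
  then have "F = {} \<or> F = {1}" by (auto dest: subset_singletonD)
  then show ?case by auto
next
  case (insert p P F)
  have p: "prime p" using insert.prems by auto
  define x where "x = real p powr (-\<nu>)"
  have x: "0 \<le> x" "x < 1"
    unfolding x_def using p assms(3) prime_gt_1_nat by (auto intro!: powr_less_one)
  define cofactor where "cofactor n = n div p ^ multiplicity p n" for n
  define M where "M = cofactor ` F"
  define K where "K = Max (insert 0 (multiplicity p ` F))"
  note split = split_off_prime_power[OF p, of _ P, folded cofactor_def]
  have fin: "finite ({..K} \<times> M)" unfolding M_def using insert.prems by auto
  have "\<forall>m\<in>M. m > 0 \<and> prime_factors m \<subseteq> P"
    unfolding M_def using insert.prems split(2,3) by auto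
  then have cofactor_sum: "(\<Sum>m\<in>M. real m powr (-\<nu>)) \<le> (\<Prod>q\<in>P. 1 / (1 - real q powr (-\<nu>)))"
    using insert.prems(1,2) unfolding M_def by (intro insert.IH) auto
  have cover: "F \<subseteq> (\<lambda>(k, m). p ^ k * m) ` ({..K} \<times> M)"
  proof
    fix n assume n: "n \<in> F"
    have "multiplicity p n \<le> K" unfolding K_def using insert.prems(2) n by (auto intro: Max_ge)
    moreover have "n = p ^ multiplicity p n * cofactor n"
      using n insert.prems(3) by (intro split(1)) auto
    ultimately show "n \<in> (\<lambda>(k, m). p ^ k * m) ` ({..K} \<times> M)"
      unfolding M_def using n by (intro rev_image_eqI[of "(multiplicity p n, cofactor n)"]) auto
  qed
  have "(\<Sum>n\<in>F. real n powr (-\<nu>)) \<le> (\<Sum>n\<in>(\<lambda>(k, m). p ^ k * m) ` ({..K} \<times> M). real n powr (-\<nu>))"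
    using cover fin by (intro sum_mono2) auto
  also have "\<dots> \<le> (\<Sum>km\<in>{..K} \<times> M. real (case km of (k, m) \<Rightarrow> p ^ k * m) powr (-\<nu>))"
    by (rule sum_image_le[OF fin, of "\<lambda>n. real n powr (-\<nu>)", unfolded o_def]) simp
  also have "\<dots> = (\<Sum>(k, m)\<in>{..K} \<times> M. x ^ k * real m powr (-\<nu>))"
    using p prime_gt_0_nat unfolding x_def
    by (intro sum.cong refl) (auto simp del: of_nat_mult of_nat_power simp: powr_prime_power_mult)
  also have "\<dots> = (\<Sum>k\<le>K. x ^ k) * (\<Sum>m\<in>M. real m powr (-\<nu>))"
    by (simp add: sum.cartesian_product[symmetric] sum_product)
  also have "\<dots> \<le> 1 / (1 - x) * (\<Prod>q\<in>P. 1 / (1 - real q powr (-\<nu>)))"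
    using cofactor_sum x
    by (intro mult_mono geometric_partial_sum_le sum_nonneg) auto
  also have "\<dots> = (\<Prod>q\<in>insert p P. 1 / (1 - real q powr (-\<nu>)))"
    using insert.hyps unfolding x_def by simp
  finally show ?case .
qed

lemma euler_factor_le_exp:
  fixes x a :: real
  assumes "0 \<le> x" "x \<le> a" "a < 1"
  shows "1 / (1 - x) \<le> exp (x / (1 - a))"
proof -
  have "1 / (1 - x) = 1 + x / (1 - x)" using assms by (simp add: field_simps)
  also have "\<dots> \<le> 1 + x / (1 - a)" using assms by (simp add: divide_left_mono)
  also have "\<dots> \<le> exp (x / (1 - a))" by (rule exp_ge_add_one_self)
  finally show ?thesis .
qed

lemma euler_product_le_exp:
  fixes \<nu> :: real
  assumes "finite P" "\<forall>p\<in>P. prime p" "\<nu> > 0"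
  shows "(\<Prod>p\<in>P. 1 / (1 - real p powr (-\<nu>)))
           \<le> exp ((\<Sum>p\<in>P. real p powr (-\<nu>)) / (1 - 2 powr (-\<nu>)))"
proof -
  have a: "2 powr (-\<nu>) < (1::real)" using assms(3) by (intro powr_less_one) auto
  have "(\<Prod>p\<in>P. 1 / (1 - real p powr (-\<nu>)))
          \<le> (\<Prod>p\<in>P. exp (real p powr (-\<nu>) / (1 - 2 powr (-\<nu>))))"
  proof (rule prod_mono, safe)
    fix p assume "p \<in> P"
    then have "2 \<le> real p" using assms(2) prime_ge_2_nat by fastforce
    then have x: "real p powr (-\<nu>) \<le> 2 powr (-\<nu>)" using assms(3) by (intro powr_mono2') auto
    then show "0 \<le> 1 / (1 - real p powr (-\<nu>))" using a by auto
    show "1 / (1 - real p powr (-\<nu>)) \<le> exp (real p powr (-\<nu>) / (1 - 2 powr (-\<nu>)))"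
      by (rule euler_factor_le_exp[OF _ x a]) auto
  qed
  also have "\<dots> = exp ((\<Sum>p\<in>P. real p powr (-\<nu>)) / (1 - 2 powr (-\<nu>)))"
    by (simp add: exp_sum[OF assms(1), symmetric] sum_divide_distrib)
  finally show ?thesis .
qed

lemma summable_if_Supp_summable:
  fixes \<nu> :: real
  assumes Q: "0 \<notin> Q" and \<nu>: "\<nu> > 0"
    and summable: "(\<lambda>p. real p powr (-\<nu>)) summable_on Supp Q"
  shows "(\<lambda>q. real q powr (-\<nu>)) summable_on Q"
proof (rule nonneg_bdd_above_summable_on)
  have a: "2 powr (-\<nu>) < (1::real)" using \<nu> by (intro powr_less_one) auto
  define T where "T = infsum (\<lambda>p. real p powr (-\<nu>)) (Supp Q)"
  show "bdd_above (sum (\<lambda>q. real q powr (-\<nu>)) ` {F. F \<subseteq> Q \<and> finite F})"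
  proof (rule bdd_aboveI2)
    fix F assume F: "F \<in> {F. F \<subseteq> Q \<and> finite F}"
    define P where "P = \<Union>(prime_factors ` F)"
    have P: "finite P" "\<forall>p\<in>P. prime p" "P \<subseteq> Supp Q"
      unfolding P_def Supp_def using F by (auto simp: in_prime_factors_iff)
    have smooth: "\<forall>n\<in>F. n > 0 \<and> prime_factors n \<subseteq> P"
      using F Q unfolding P_def by (auto intro: Nat.gr0I)
    have "(\<Sum>n\<in>F. real n powr (-\<nu>)) \<le> (\<Prod>p\<in>P. 1 / (1 - real p powr (-\<nu>)))"
      using smooth_sum_le_euler_product[OF P(1,2) \<nu>] F smooth by auto
    also have "\<dots> \<le> exp ((\<Sum>p\<in>P. real p powr (-\<nu>)) / (1 - 2 powr (-\<nu>)))"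
      by (rule euler_product_le_exp[OF P(1,2) \<nu>])
    also have "\<dots> \<le> exp (T / (1 - 2 powr (-\<nu>)))"
      unfolding T_def using P a
      by (intro exp_mono divide_right_mono finite_sum_le_infsum[OF summable]) auto
    finally show "sum (\<lambda>q. real q powr (-\<nu>)) F \<le> exp (T / (1 - 2 powr (-\<nu>)))" .
  qed
qed auto

lemma summable_iff_Supp_summable:
  fixes \<nu> :: real
  assumes "compl_free Q" "\<nu> > 0"
  shows "(\<lambda>q. real q powr (-\<nu>)) summable_on Q \<longleftrightarrow>
         (\<lambda>p. real p powr (-\<nu>)) summable_on Supp Q"
  using summable_on_subset_banach[OF _ Supp_subset_if_compl_free[OF assms(1)]]
    summable_if_Supp_summable[OF _ assms(2)] assms(1)
  unfolding compl_free_def by blast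

theorem mainTheorem5:
  fixes Q :: "nat set"
  assumes "infinite Q" and "compl_free Q"
  shows "(\<forall>\<nu>::real. \<nu> > 0 \<longrightarrow>
            ((\<lambda>q. real q powr (-\<nu>)) summable_on Q \<longleftrightarrow>
             (\<lambda>p. real p powr (-\<nu>)) summable_on Supp Q))
       \<and> (\<forall>Q'. infinite Q' \<and> compl_free Q' \<and> Supp Q' = Supp Q \<longrightarrow> conv_exp Q' = conv_exp Q)"
proof (intro conjI allI impI)
  fix \<nu> :: real assume "\<nu> > 0"
  then show "(\<lambda>q. real q powr (-\<nu>)) summable_on Q \<longleftrightarrow>
             (\<lambda>p. real p powr (-\<nu>)) summable_on Supp Q"
    by (rule summable_iff_Supp_summable[OF assms(2)])
next
  fix Q' assume Q': "infinite Q' \<and> compl_free Q' \<and> Supp Q' = Supp Q"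
  have "{\<nu>. \<nu> > 0 \<and> (\<lambda>q. real q powr (-\<nu>)) summable_on Q'} =
        {\<nu>. \<nu> > 0 \<and> (\<lambda>q. real q powr (-\<nu>)) summable_on Q}"
    using summable_iff_Supp_summable[OF assms(2)] summable_iff_Supp_summable[of Q'] Q' by auto
  then show "conv_exp Q' = conv_exp Q" unfolding conv_exp_def by simp
qed

end
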